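(* Let $n \ge 3$, let $u_1,u_2 \in M_n(\mathbb C)$ be unitaries such that $\{1_n, u_1^*u_2, u_2^*u_1\}$ is linearly independent, let $0<t<1$, and define $\Phi(x) = t\,u_1xu_1^* + (1-t)\,u_2xu_2^*$ for $x\in M_n(\mathbb C)$. Let $(\mathcal A,\tau)$ be a von Neumann algebra with a normal faithful tracial state. Then $\Phi$ is factorizable with ancilla $(\mathcal A,\tau)$ if and only if $\mathcal A$ contains a projection $p$ with $\tau(p) = t$. *)

theory Defs
  imports "HOL-Analysis.Analysis"
begin

definition cadj :: "complex^'n^'n \<Rightarrow> complex^'n^'n" where
  "cadj A = (\<chi> i j. cnj (A $ j $ i))"

definition cunitary :: "complex^'n^'n \<Rightarrow> bool" where
  "cunitary U \<longleftrightarrow> U ** cadj U = mat 1 \<and> cadj U ** U = mat 1"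

definition lin_indep3 :: "complex^'n^'n \<Rightarrow> complex^'n^'n \<Rightarrow> complex^'n^'n \<Rightarrow> bool" where
  "lin_indep3 A B C \<longleftrightarrow> (\<forall>a b c :: complex.
     (\<chi> i j. a * A $ i $ j + b * B $ i $ j + c * C $ i $ j) = 0 \<longrightarrow> a = 0 \<and> b = 0 \<and> c = 0)"

text \<open>A general complex Hilbert space, modelled (up to unitary isomorphism) as
  l^2('i) for an arbitrary index type 'i.  Bounded operators are functions on
  'i \<Rightarrow> complex that are linear and bounded on l^2 and vanish outside l^2.\<close>

type_synonym 'i op = "('i \<Rightarrow> complex) \<Rightarrow> ('i \<Rightarrow> complex)"

definition l2 :: "('i \<Rightarrow> complex) set" where
  "l2 = {f. (\<lambda>i. (cmod (f i))^2) summable_on UNIV}"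

definition ip :: "('i \<Rightarrow> complex) \<Rightarrow> ('i \<Rightarrow> complex) \<Rightarrow> complex" where
  "ip f g = infsum (\<lambda>i. cnj (f i) * g i) UNIV"

definition l2norm :: "('i \<Rightarrow> complex) \<Rightarrow> real" where
  "l2norm f = sqrt (infsum (\<lambda>i. (cmod (f i))^2) UNIV)"

definition bounded_op :: "'i op \<Rightarrow> bool" where
  "bounded_op T \<longleftrightarrow>
     (\<forall>f\<in>l2. T f \<in> l2) \<and>
     (\<forall>f\<in>l2. \<forall>g\<in>l2. \<forall>c::complex. T (\<lambda>i. f i + c * g i) = (\<lambda>i. T f i + c * T g i)) \<and>
     (\<exists>K. \<forall>f\<in>l2. l2norm (T f) \<le> K * l2norm f) \<and>
     (\<forall>f. f \<notin> l2 \<longrightarrow> T f = (\<lambda>i. 0))"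

definition op_id :: "'i op" where
  "op_id f = (if f \<in> l2 then f else (\<lambda>i. 0))"

definition op_zero :: "'i op" where
  "op_zero = (\<lambda>f i. 0)"

definition op_add :: "'i op \<Rightarrow> 'i op \<Rightarrow> 'i op" where
  "op_add T S = (\<lambda>f i. T f i + S f i)"

definition op_smult :: "complex \<Rightarrow> 'i op \<Rightarrow> 'i op" where
  "op_smult c T = (\<lambda>f i. c * T f i)"

definition op_sum :: "('a \<Rightarrow> 'i op) \<Rightarrow> 'a set \<Rightarrow> 'i op" where
  "op_sum F A = (\<lambda>f i. \<Sum>a\<in>A. F a f i)"

definition op_adj :: "'i op \<Rightarrow> 'i op" where
  "op_adj T = (THE S. bounded_op S \<and> (\<forall>f\<in>l2. \<forall>g\<in>l2. ip (S f) g = ip f (T g)))"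

definition self_adjoint_op :: "'i op \<Rightarrow> bool" where
  "self_adjoint_op T \<longleftrightarrow> bounded_op T \<and> op_adj T = T"

definition positive_op :: "'i op \<Rightarrow> bool" where
  "positive_op T \<longleftrightarrow> bounded_op T \<and>
     (\<forall>f\<in>l2. Im (ip f (T f)) = 0 \<and> Re (ip f (T f)) \<ge> 0)"

definition op_le :: "'i op \<Rightarrow> 'i op \<Rightarrow> bool" where
  "op_le S T \<longleftrightarrow> positive_op (op_add T (op_smult (-1) S))"

definition commutant :: "'i op set \<Rightarrow> 'i op set" where
  "commutant M = {S. bounded_op S \<and> (\<forall>T\<in>M. S \<circ> T = T \<circ> S)}"

definition von_neumann_algebra :: "'i op set \<Rightarrow> bool" where
  "von_neumann_algebra M \<longleftrightarrow>
     M \<subseteq> Collect bounded_op \<and> (\<forall>T\<in>M. op_adj T \<in> M) \<and> commutant (commutant M) = M"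

definition tracial_state :: "'i op set \<Rightarrow> ('i op \<Rightarrow> complex) \<Rightarrow> bool" where
  "tracial_state M \<tau> \<longleftrightarrow>
     (\<forall>T\<in>M. \<forall>S\<in>M. \<forall>c. \<tau> (op_add T (op_smult c S)) = \<tau> T + c * \<tau> S) \<and>
     (\<forall>T\<in>M. positive_op T \<longrightarrow> Im (\<tau> T) = 0 \<and> Re (\<tau> T) \<ge> 0) \<and>
     \<tau> op_id = 1 \<and>
     (\<forall>T\<in>M. \<forall>S\<in>M. \<tau> (T \<circ> S) = \<tau> (S \<circ> T))"

definition faithful_state :: "'i op set \<Rightarrow> ('i op \<Rightarrow> complex) \<Rightarrow> bool" where
  "faithful_state M \<tau> \<longleftrightarrow> (\<forall>T\<in>M. positive_op T \<and> \<tau> T = 0 \<longrightarrow> T = op_zero)"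

definition normal_state :: "'i op set \<Rightarrow> ('i op \<Rightarrow> complex) \<Rightarrow> bool" where
  "normal_state M \<tau> \<longleftrightarrow>
     (\<forall>D T. D \<subseteq> M \<and> D \<noteq> {} \<and> (\<forall>S\<in>D. positive_op S) \<and>
        (\<forall>a\<in>D. \<forall>b\<in>D. \<exists>c\<in>D. op_le a c \<and> op_le b c) \<and>
        T \<in> M \<and> self_adjoint_op T \<and> (\<forall>S\<in>D. op_le S T) \<and>
        (\<forall>T'. self_adjoint_op T' \<and> (\<forall>S\<in>D. op_le S T') \<longrightarrow> op_le T T')
      \<longrightarrow> Re (\<tau> T) = (SUP S\<in>D. Re (\<tau> S)))"

definition normal_faithful_tracial_state :: "'i op set \<Rightarrow> ('i op \<Rightarrow> complex) \<Rightarrow> bool" where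
  "normal_faithful_tracial_state M \<tau> \<longleftrightarrow>
     tracial_state M \<tau> \<and> faithful_state M \<tau> \<and> normal_state M \<tau>"

text \<open>Factorizability with ancilla (M,\<tau>): there is a unitary U in M_n(C) \<otimes> M
  (an n x n matrix with entries in M) with \<Phi>(x) = (id \<otimes> \<tau>)(U^*(x \<otimes> 1)U).\<close>
definition factorizable_with_ancilla ::
  "(complex^'n^'n \<Rightarrow> complex^'n^'n) \<Rightarrow> 'i op set \<Rightarrow> ('i op \<Rightarrow> complex) \<Rightarrow> bool" where
  "factorizable_with_ancilla \<Phi> M \<tau> \<longleftrightarrow>
     (\<exists>U :: 'n \<Rightarrow> 'n \<Rightarrow> 'i op.
        (\<forall>j k. U j k \<in> M) \<and>
        (\<forall>j l. op_sum (\<lambda>k. op_adj (U k j) \<circ> U k l) UNIV = (if j = l then op_id else op_zero)) \<and>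
        (\<forall>j l. op_sum (\<lambda>k. U j k \<circ> op_adj (U l k)) UNIV = (if j = l then op_id else op_zero)) \<and>
        (\<forall>x j l. \<Phi> x $ j $ l =
           \<tau> (op_sum (\<lambda>(k, m). op_smult (x $ k $ m) (op_adj (U k j) \<circ> U m l)) UNIV)))"

end

theory Submission
  imports Defs
begin

text \<open>
  If \<open>p \<in> M\<close> is a projection with \<open>\<tau> p = t\<close>, the operator matrix
  \<open>U = u\<^sub>1\<^sup>* \<otimes> p + u\<^sub>2\<^sup>* \<otimes> (1 - p)\<close> is unitary and implements \<open>\<Phi>\<close>.
  Conversely, let a unitary \<open>U = (U\<^sub>k\<^sub>j)\<close> with entries in \<open>M\<close> implement \<open>\<Phi>\<close>.
  Evaluating \<open>\<Phi>\<close> on matrix units gives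
  \<open>\<tau>(U\<^sub>k\<^sub>j\<^sup>* U\<^sub>m\<^sub>l) = t \<alpha>\<^sub>k\<^sub>j\<^sup>* \<alpha>\<^sub>m\<^sub>l + (1 - t) \<beta>\<^sub>k\<^sub>j\<^sup>* \<beta>\<^sub>m\<^sub>l\<close> with \<open>\<alpha> = u\<^sub>1\<^sup>*\<close>, \<open>\<beta> = u\<^sub>2\<^sup>*\<close>,
  so the Gram matrix of the entries for the form \<open>\<tau>(a\<^sup>* b)\<close> has rank two. As \<open>\<tau>\<close> is
  faithful, every entry is \<open>U\<^sub>k\<^sub>j = \<alpha>\<^sub>k\<^sub>j w\<^sub>1 + \<beta>\<^sub>k\<^sub>j w\<^sub>2\<close> for fixed \<open>w\<^sub>1, w\<^sub>2 \<in> M\<close> with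
  \<open>\<tau>(w\<^sub>1\<^sup>* w\<^sub>1) = t\<close>. Writing out \<open>U\<^sup>*U = 1\<close> and \<open>UU\<^sup>* = 1\<close> and using the linear
  independence of \<open>1, u\<^sub>1\<^sup>*u\<^sub>2, u\<^sub>2\<^sup>*u\<^sub>1\<close> (and of its conjugate \<open>1, u\<^sub>1u\<^sub>2\<^sup>*, u\<^sub>2u\<^sub>1\<^sup>*\<close>)
  gives \<open>w\<^sub>1\<^sup>*w\<^sub>1 + w\<^sub>2\<^sup>*w\<^sub>2 = 1\<close> and \<open>w\<^sub>1w\<^sub>2\<^sup>* = 0\<close>; hence \<open>p = w\<^sub>1\<^sup>*w\<^sub>1\<close> is a projection
  of trace \<open>t\<close>.

  Since \<open>op_adj\<close> is defined by a definite description, adjoints of bounded operators on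
  \<open>l2\<close> are first shown to exist; they are built from the coordinates \<open>\<langle>T e\<^sub>i, f\<rangle>\<close>.
\<close>

section \<open>The sequence space l2\<close>

definition l2_unit :: "'i \<Rightarrow> 'i \<Rightarrow> complex" where
  "l2_unit a = (\<lambda>j. if j = a then 1 else 0)"

lemma l2_zero [simp]: "(\<lambda>i. 0) \<in> l2"
  by (simp add: l2_def)

lemma l2_lincomb:
  assumes "f \<in> l2" "g \<in> l2"
  shows "(\<lambda>i. f i + c * g i) \<in> l2"
proof -
  have "(cmod (f i + c * g i))\<^sup>2 \<le> 2 * (cmod (f i))\<^sup>2 + 2 * (cmod c)\<^sup>2 * (cmod (g i))\<^sup>2" for i
  proof -
    have "cmod (f i + c * g i) \<le> cmod (f i) + cmod c * cmod (g i)"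
      by (metis norm_mult norm_triangle_ineq)
    then have "(cmod (f i + c * g i))\<^sup>2 \<le> (cmod (f i) + cmod c * cmod (g i))\<^sup>2"
      by (simp add: power_mono)
    also have "\<dots> \<le> 2 * (cmod (f i))\<^sup>2 + 2 * (cmod c)\<^sup>2 * (cmod (g i))\<^sup>2"
      using sum_squares_bound[of "cmod (f i)" "cmod c * cmod (g i)"]
      by (simp add: power2_eq_square algebra_simps)
    finally show ?thesis .
  qed
  moreover have "(\<lambda>i. 2 * (cmod (f i))\<^sup>2 + 2 * (cmod c)\<^sup>2 * (cmod (g i))\<^sup>2) summable_on UNIV"
    using assms unfolding l2_def by (intro summable_on_add summable_on_cmult_right) auto
  ultimately show ?thesis
    unfolding l2_def by (auto intro: summable_on_comparison_test)
qed

lemma l2_scale: "f \<in> l2 \<Longrightarrow> (\<lambda>i. c * f i) \<in> l2"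
  using l2_lincomb[of "\<lambda>i. 0" f c] by simp

lemma l2_add: "f \<in> l2 \<Longrightarrow> g \<in> l2 \<Longrightarrow> (\<lambda>i. f i + g i) \<in> l2"
  using l2_lincomb[of f g 1] by simp

lemma l2_sum:
  "finite A \<Longrightarrow> (\<And>a. a \<in> A \<Longrightarrow> g a \<in> l2) \<Longrightarrow> (\<lambda>i. \<Sum>a\<in>A. c a * g a i) \<in> l2"
  by (induction A rule: finite_induct) (auto intro!: l2_add l2_scale)

lemma l2_finite_support: "finite F \<Longrightarrow> (\<lambda>j. if j \<in> F then g j else 0) \<in> l2"
  unfolding l2_def
  by (auto intro: finite_nonzero_values_imp_summable_on elim: rev_finite_subset)

lemma l2_unit [simp]: "l2_unit a \<in> l2"
  using l2_finite_support[of "{a}" "\<lambda>_. 1"] by (simp add: l2_unit_def)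

lemma l2_norm_mult_summable:
  assumes "f \<in> l2" "g \<in> l2"
  shows "(\<lambda>i. cmod (f i) * cmod (g i)) summable_on UNIV"
proof (rule summable_on_comparison_test)
  show "(\<lambda>i. (cmod (f i))\<^sup>2 + (cmod (g i))\<^sup>2) summable_on UNIV"
    using assms unfolding l2_def by (intro summable_on_add) auto
  show "cmod (f i) * cmod (g i) \<le> (cmod (f i))\<^sup>2 + (cmod (g i))\<^sup>2" for i
    using sum_squares_bound[of "cmod (f i)" "cmod (g i)"]
      mult_nonneg_nonneg[OF norm_ge_zero norm_ge_zero, of "f i" "g i"] by linarith
qed simp

lemma ip_has_sum: "f \<in> l2 \<Longrightarrow> g \<in> l2 \<Longrightarrow> ((\<lambda>i. cnj (f i) * g i) has_sum ip f g) UNIV"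
  unfolding ip_def
  by (metis (no_types, lifting) abs_summable_summable l2_norm_mult_summable complex_mod_cnj
      has_sum_infsum norm_mult summable_on_cong)

lemma ip_summable: "f \<in> l2 \<Longrightarrow> g \<in> l2 \<Longrightarrow> (\<lambda>i. cnj (f i) * g i) summable_on UNIV"
  using ip_has_sum summable_on_def by blast

lemma cnj_ip: "cnj (ip f g) = ip g f"
  unfolding ip_def infsum_cnj[symmetric] by (simp add: mult.commute)

lemma ip_lincomb_right:
  assumes "f \<in> l2" "g \<in> l2" "h \<in> l2"
  shows "ip f (\<lambda>i. g i + c * h i) = ip f g + c * ip f h"
proof -
  have "ip f (\<lambda>i. g i + c * h i) = infsum (\<lambda>i. cnj (f i) * g i + c * (cnj (f i) * h i)) UNIV"
    unfolding ip_def by (simp add: algebra_simps)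
  also have "\<dots> = ip f g + c * ip f h"
    unfolding ip_def using assms
    by (subst infsum_add) (auto intro!: summable_on_cmult_right ip_summable simp: infsum_cmult_right')
  finally show ?thesis .
qed

lemma ip_lincomb_left:
  assumes "f \<in> l2" "g \<in> l2" "h \<in> l2"
  shows "ip (\<lambda>i. g i + c * h i) f = ip g f + cnj c * ip h f"
  using arg_cong[OF ip_lincomb_right[OF assms, of c], of cnj] by (simp add: cnj_ip)

lemma ip_scale_left: "ip (\<lambda>i. c * f i) g = cnj c * ip f g"
  unfolding ip_def by (simp add: infsum_cmult_right'[symmetric] mult.assoc)

lemma ip_scale_right: "ip f (\<lambda>i. c * g i) = c * ip f g"
  unfolding ip_def by (simp add: infsum_cmult_right'[symmetric] algebra_simps)

lemma ip_zero_right [simp]: "ip f (\<lambda>i. 0) = 0"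
  unfolding ip_def by simp

lemma l2norm_nonneg: "l2norm f \<ge> 0"
  unfolding l2norm_def by (simp add: infsum_nonneg)

lemma l2norm_power2: "(l2norm f)\<^sup>2 = infsum (\<lambda>i. (cmod (f i))\<^sup>2) UNIV"
  unfolding l2norm_def by (simp add: infsum_nonneg)

lemma l2norm_scale: "l2norm (\<lambda>i. c * f i) = cmod c * l2norm f"
  by (simp add: l2norm_def norm_mult power_mult_distrib infsum_cmult_right' real_sqrt_mult)

lemma ip_self:
  assumes "f \<in> l2"
  shows "ip f f = complex_of_real ((l2norm f)\<^sup>2)"
proof -
  have "((\<lambda>i. complex_of_real ((cmod (f i))\<^sup>2)) has_sum complex_of_real ((l2norm f)\<^sup>2)) UNIV"
    unfolding l2norm_power2 using assms unfolding l2_def by (intro has_sum_of_real has_sum_infsum) simp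
  moreover have "complex_of_real ((cmod (f i))\<^sup>2) = cnj (f i) * f i" for i
    by (metis complex_norm_square mult.commute)
  ultimately show ?thesis
    unfolding ip_def by (simp add: infsumI)
qed

lemma l2norm_eq_0:
  assumes "f \<in> l2" "l2norm f = 0"
  shows "f = (\<lambda>i. 0)"
proof
  fix i
  have "infsum (\<lambda>i. (cmod (f i))\<^sup>2) UNIV \<le> 0"
    using assms(2) l2norm_power2[of f] by simp
  then have "(cmod (f i))\<^sup>2 = 0"
    by (rule nonneg_infsum_le_0D) (use assms(1) in \<open>auto simp: l2_def\<close>)
  then show "f i = 0" by simp
qed

lemma ip_self_eq_0: "f \<in> l2 \<Longrightarrow> ip f f = 0 \<Longrightarrow> f = (\<lambda>i. 0)"
  using ip_self l2norm_eq_0 by fastforce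

lemma l2_cauchy_schwarz:
  assumes f: "f \<in> l2" and g: "g \<in> l2"
  shows "cmod (ip f g) \<le> l2norm f * l2norm g"
proof (cases "l2norm f = 0 \<or> l2norm g = 0")
  case True
  then have "f = (\<lambda>i. 0) \<or> g = (\<lambda>i. 0)"
    using l2norm_eq_0 f g by blast
  then show ?thesis
    by (auto simp: ip_def l2norm_nonneg)
next
  case False
  define s where "s = l2norm g / l2norm f"
  have s: "s > 0"
    using False l2norm_nonneg[of f] l2norm_nonneg[of g] by (simp add: s_def)
  \<comment> \<open>weighted AM-GM, with the weight chosen to make the final bound sharp\<close>
  have AM_GM: "cmod (f i) * cmod (g i) \<le> s / 2 * (cmod (f i))\<^sup>2 + 1 / (2 * s) * (cmod (g i))\<^sup>2" for i
    using sum_squares_bound[of "s * cmod (f i)" "cmod (g i)"] s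
    by (simp add: field_simps power2_eq_square)
  have "cmod (ip f g) \<le> infsum (\<lambda>i. cmod (f i) * cmod (g i)) UNIV"
    using l2_norm_mult_summable[OF f g]
    by (intro norm_infsum_le[OF ip_has_sum[OF f g]]) (auto simp: norm_mult)
  also have "\<dots> \<le> infsum (\<lambda>i. s / 2 * (cmod (f i))\<^sup>2 + 1 / (2 * s) * (cmod (g i))\<^sup>2) UNIV"
    using f g unfolding l2_def
    by (intro infsum_mono AM_GM l2_norm_mult_summable[OF f g] summable_on_add summable_on_cmult_right)
      auto
  also have "\<dots> = s / 2 * (l2norm f)\<^sup>2 + 1 / (2 * s) * (l2norm g)\<^sup>2"
  proof -
    have "(\<lambda>i. (cmod (f i))\<^sup>2) summable_on UNIV" "(\<lambda>i. (cmod (g i))\<^sup>2) summable_on UNIV"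
      using f g by (simp_all add: l2_def)
    from this[THEN summable_on_cmult_right] show ?thesis
      unfolding l2norm_power2 by (simp only: infsum_add infsum_cmult_right')
  qed
  also have "\<dots> = l2norm f * l2norm g"
    using False unfolding s_def by (simp add: field_simps power2_eq_square)
  finally show ?thesis .
qed

lemma l2norm_triangle:
  assumes f: "f \<in> l2" and g: "g \<in> l2"
  shows "l2norm (\<lambda>i. f i + g i) \<le> l2norm f + l2norm g"
proof -
  define h where "h = (\<lambda>i. f i + g i)"
  have h: "h \<in> l2"
    unfolding h_def using l2_add[OF f g] .
  have "(l2norm h)\<^sup>2 = Re (ip h h)"
    by (simp add: ip_self h del: of_real_power)
  also have "ip h h = ip f f + ip f g + (ip g f + ip g g)"
    using ip_lincomb_left[OF h f g, of 1] ip_lincomb_right[OF f f g, of 1] ip_lincomb_right[OF g f g, of 1]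
    by (simp add: h_def)
  also have "Re \<dots> = (l2norm f)\<^sup>2 + (l2norm g)\<^sup>2 + Re (ip f g) + Re (ip g f)"
    by (simp add: ip_self f g del: of_real_power)
  also have "\<dots> \<le> (l2norm f + l2norm g)\<^sup>2"
    using l2_cauchy_schwarz[OF f g] l2_cauchy_schwarz[OF g f] complex_Re_le_cmod[of "ip f g"]
      complex_Re_le_cmod[of "ip g f"]
    by (simp add: power2_eq_square algebra_simps)
  finally show ?thesis
    unfolding h_def by (rule power2_le_imp_le) (simp add: l2norm_nonneg)
qed

lemma l2_truncations_tendsto:
  assumes g: "g \<in> l2"
  shows "((\<lambda>F. l2norm (\<lambda>j. g j - (if j \<in> F then g j else 0))) \<longlongrightarrow> 0) (finite_subsets_at_top UNIV)"
proof -
  define S where "S = infsum (\<lambda>i. (cmod (g i))\<^sup>2) UNIV"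
  have S: "((\<lambda>i. (cmod (g i))\<^sup>2) has_sum S) UNIV"
    unfolding S_def using g by (simp add: l2_def)
  have "l2norm (\<lambda>j. g j - (if j \<in> F then g j else 0)) = sqrt (S - (\<Sum>i\<in>F. (cmod (g i))\<^sup>2))"
    if "finite F" for F
  proof -
    have "((\<lambda>i. if i \<in> F then (cmod (g i))\<^sup>2 else 0) has_sum (\<Sum>i\<in>F. (cmod (g i))\<^sup>2)) UNIV"
      by (rule has_sum_finite_neutralI[OF that]) auto
    moreover have "(\<lambda>i. (cmod (g i - (if i \<in> F then g i else 0)))\<^sup>2)
        = (\<lambda>i. (cmod (g i))\<^sup>2 + - (if i \<in> F then (cmod (g i))\<^sup>2 else 0))"
      by (simp add: fun_eq_iff)
    ultimately have "((\<lambda>i. (cmod (g i - (if i \<in> F then g i else 0)))\<^sup>2)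
        has_sum S - (\<Sum>i\<in>F. (cmod (g i))\<^sup>2)) UNIV"
      using has_sum_add[OF S has_sum_uminusI] by simp
    then show ?thesis
      unfolding l2norm_def by (simp add: infsumI)
  qed
  then have "\<forall>\<^sub>F F in finite_subsets_at_top UNIV.
      sqrt (S - (\<Sum>i\<in>F. (cmod (g i))\<^sup>2)) = l2norm (\<lambda>j. g j - (if j \<in> F then g j else 0))"
    by (intro eventually_finite_subsets_at_top_weakI) simp
  moreover have "((\<lambda>F. sqrt (S - (\<Sum>i\<in>F. (cmod (g i))\<^sup>2))) \<longlongrightarrow> sqrt (S - S)) (finite_subsets_at_top UNIV)"
    using S unfolding has_sum_def by (intro tendsto_intros)
  ultimately have "((\<lambda>F. l2norm (\<lambda>j. g j - (if j \<in> F then g j else 0))) \<longlongrightarrow> sqrt (S - S))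
      (finite_subsets_at_top UNIV)"
    by (rule Lim_transform_eventually[rotated])
  then show ?thesis
    by simp
qed

lemma linear_functional_finite_support:
  fixes \<phi> :: "('i \<Rightarrow> complex) \<Rightarrow> complex"
  assumes linear: "\<And>g h c. g \<in> l2 \<Longrightarrow> h \<in> l2 \<Longrightarrow> \<phi> (\<lambda>i. g i + c * h i) = \<phi> g + c * \<phi> h"
    and "finite F"
  shows "\<phi> (\<lambda>j. if j \<in> F then g j else 0) = (\<Sum>i\<in>F. g i * \<phi> (l2_unit i))"
  using \<open>finite F\<close>
proof (induction F rule: finite_induct)
  case empty
  show ?case
    using linear[of "\<lambda>i. 0" "\<lambda>i. 0" 1] by simp
next
  case (insert a F)
  have "(\<lambda>j. if j \<in> insert a F then g j else 0) = (\<lambda>j. (if j \<in> F then g j else 0) + g a * l2_unit a j)"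
    using insert.hyps by (auto simp: l2_unit_def)
  then have "\<phi> (\<lambda>j. if j \<in> insert a F then g j else 0) = \<phi> (\<lambda>j. if j \<in> F then g j else 0) + g a * \<phi> (l2_unit a)"
    using linear[OF l2_finite_support[OF insert.hyps(1), of g] l2_unit, of "g a"] by simp
  also have "\<dots> = (\<Sum>i\<in>insert a F. g i * \<phi> (l2_unit i))"
    using insert by (simp add: add.commute)
  finally show ?case .
qed

lemma bounded_functional_has_sum:
  fixes \<phi> :: "('i \<Rightarrow> complex) \<Rightarrow> complex"
  assumes linear: "\<And>g h c. g \<in> l2 \<Longrightarrow> h \<in> l2 \<Longrightarrow> \<phi> (\<lambda>i. g i + c * h i) = \<phi> g + c * \<phi> h"
    and bounded: "\<And>g. g \<in> l2 \<Longrightarrow> cmod (\<phi> g) \<le> C * l2norm g"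
    and g: "g \<in> l2"
  shows "((\<lambda>i. g i * \<phi> (l2_unit i)) has_sum \<phi> g) UNIV"
proof -
  define trunc where "trunc F = (\<lambda>j. if j \<in> F then g j else 0)" for F
  have "\<forall>\<^sub>F F in finite_subsets_at_top UNIV.
      norm ((\<Sum>i\<in>F. g i * \<phi> (l2_unit i)) - \<phi> g) \<le> C * l2norm (\<lambda>j. g j - trunc F j)"
  proof (rule eventually_finite_subsets_at_top_weakI)
    fix F :: "'i set"
    assume F: "finite F"
    have trunc: "trunc F \<in> l2"
      unfolding trunc_def using l2_finite_support[OF F] .
    have sum_eq: "(\<Sum>i\<in>F. g i * \<phi> (l2_unit i)) = \<phi> (trunc F)"
      unfolding trunc_def by (rule linear_functional_finite_support[where \<phi> = \<phi>, OF linear F, symmetric])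
    have diff_eq: "\<phi> (\<lambda>j. g j + (-1) * trunc F j) = \<phi> g - \<phi> (trunc F)"
      using linear[OF g trunc, of "-1"] by simp
    have "norm ((\<Sum>i\<in>F. g i * \<phi> (l2_unit i)) - \<phi> g) = cmod (\<phi> (\<lambda>j. g j + (-1) * trunc F j))"
      unfolding sum_eq diff_eq by (rule norm_minus_commute)
    also have "\<dots> \<le> C * l2norm (\<lambda>j. g j + (-1) * trunc F j)"
      using bounded l2_lincomb[OF g trunc] by blast
    finally show "norm ((\<Sum>i\<in>F. g i * \<phi> (l2_unit i)) - \<phi> g) \<le> C * l2norm (\<lambda>j. g j - trunc F j)"
      by simp
  qed
  moreover have "((\<lambda>F. C * l2norm (\<lambda>j. g j - trunc F j)) \<longlongrightarrow> 0) (finite_subsets_at_top UNIV)"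
  proof -
    have "((\<lambda>F. C * l2norm (\<lambda>j. g j - trunc F j)) \<longlongrightarrow> C * 0) (finite_subsets_at_top UNIV)"
      unfolding trunc_def by (intro tendsto_intros l2_truncations_tendsto[OF g])
    then show ?thesis by simp
  qed
  ultimately have "((\<lambda>F. (\<Sum>i\<in>F. g i * \<phi> (l2_unit i)) - \<phi> g) \<longlongrightarrow> 0) (finite_subsets_at_top UNIV)"
    by (rule Lim_null_comparison)
  then show ?thesis
    unfolding has_sum_def by (rule LIM_zero_cancel)
qed

section \<open>Bounded operators and their adjoints\<close>

lemma bounded_op_l2: "bounded_op T \<Longrightarrow> T f \<in> l2"
  unfolding bounded_op_def by (cases "f \<in> l2") auto

lemma bounded_op_outside_l2: "bounded_op T \<Longrightarrow> f \<notin> l2 \<Longrightarrow> T f = (\<lambda>i. 0)"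
  unfolding bounded_op_def by auto

lemma bounded_op_lincomb:
  "bounded_op T \<Longrightarrow> f \<in> l2 \<Longrightarrow> g \<in> l2 \<Longrightarrow> T (\<lambda>i. f i + c * g i) = (\<lambda>i. T f i + c * T g i)"
  unfolding bounded_op_def by blast

lemma bounded_op_apply_zero: "bounded_op T \<Longrightarrow> T (\<lambda>i. 0) = (\<lambda>i. 0)"
  using bounded_op_lincomb[of T "\<lambda>i. 0" "\<lambda>i. 0" 1] by (auto simp: fun_eq_iff)

lemma bounded_op_scale: "bounded_op T \<Longrightarrow> f \<in> l2 \<Longrightarrow> T (\<lambda>i. c * f i) = (\<lambda>i. c * T f i)"
  using bounded_op_lincomb[of T "\<lambda>i. 0" f c] bounded_op_apply_zero[of T] by simp

lemma bounded_op_apply_add: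
  "bounded_op T \<Longrightarrow> f \<in> l2 \<Longrightarrow> g \<in> l2 \<Longrightarrow> T (\<lambda>i. f i + g i) = (\<lambda>i. T f i + T g i)"
  using bounded_op_lincomb[of T f g 1] by simp

lemma bounded_op_lincomb2:
  "bounded_op T \<Longrightarrow> f \<in> l2 \<Longrightarrow> g \<in> l2 \<Longrightarrow> T (\<lambda>i. a * f i + b * g i) = (\<lambda>i. a * T f i + b * T g i)"
  using bounded_op_lincomb[of T "\<lambda>i. a * f i" g b] bounded_op_scale[of T f a] l2_scale[of f a] by simp

lemma bounded_op_apply_sum:
  assumes T: "bounded_op T"
  shows "finite A \<Longrightarrow> (\<And>a. a \<in> A \<Longrightarrow> g a \<in> l2) \<Longrightarrow>
    T (\<lambda>i. \<Sum>a\<in>A. c a * g a i) = (\<lambda>i. \<Sum>a\<in>A. c a * T (g a) i)"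
proof (induction A rule: finite_induct)
  case empty
  then show ?case using bounded_op_apply_zero[OF T] by simp
next
  case (insert a A)
  then show ?case
    using bounded_op_apply_add[OF T] bounded_op_scale[OF T] l2_sum[of A g c] l2_scale[of "g a" "c a"]
    by simp
qed

lemma bounded_op_norm_bound:
  assumes "bounded_op T"
  obtains K where "K \<ge> 0" "\<And>f. f \<in> l2 \<Longrightarrow> l2norm (T f) \<le> K * l2norm f"
proof -
  obtain K where K: "\<forall>f\<in>l2. l2norm (T f) \<le> K * l2norm f"
    using assms unfolding bounded_op_def by blast
  have "l2norm (T f) \<le> max K 0 * l2norm f" if "f \<in> l2" for f
    using K that l2norm_nonneg[of f] by (metis max.cobounded1 mult_right_mono order_trans)
  then show ?thesis using that[of "max K 0"] by simp
qed

lemma ip_bounded_op_has_sum: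
  assumes T: "bounded_op T" and f: "f \<in> l2" and g: "g \<in> l2"
  shows "((\<lambda>i. g i * ip f (T (l2_unit i))) has_sum ip f (T g)) UNIV"
proof -
  obtain K where "K \<ge> 0" and K: "\<And>g. g \<in> l2 \<Longrightarrow> l2norm (T g) \<le> K * l2norm g"
    using bounded_op_norm_bound[OF T] by blast
  show ?thesis
  proof (rule bounded_functional_has_sum[where C = "l2norm f * K"])
    show "ip f (T (\<lambda>i. g i + c * h i)) = ip f (T g) + c * ip f (T h)" if "g \<in> l2" "h \<in> l2" for g h c
      using that f T by (simp add: bounded_op_lincomb ip_lincomb_right bounded_op_l2)
    show "cmod (ip f (T g)) \<le> l2norm f * K * l2norm g" if "g \<in> l2" for g
    proof -
      have "cmod (ip f (T g)) \<le> l2norm f * l2norm (T g)"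
        by (rule l2_cauchy_schwarz[OF f bounded_op_l2[OF T]])
      also have "\<dots> \<le> l2norm f * (K * l2norm g)"
        using K[OF that] l2norm_nonneg[of f] by (rule mult_left_mono)
      finally show ?thesis by (simp add: mult.assoc)
    qed
  qed (rule g)
qed

lemma adjoint_coordinates_partial_sums:
  assumes T: "bounded_op T" and "K \<ge> 0" and K: "\<And>g. g \<in> l2 \<Longrightarrow> l2norm (T g) \<le> K * l2norm g"
    and f: "f \<in> l2" and F: "finite F"
  shows "(\<Sum>i\<in>F. (cmod (ip (T (l2_unit i)) f))\<^sup>2) \<le> (K * l2norm f)\<^sup>2"
proof -
  define c where "c i = ip (T (l2_unit i)) f" for i
  define L where "L = K * l2norm f"
  define h where "h = (\<lambda>j. if j \<in> F then c j else 0)"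
  define s where "s = (\<Sum>i\<in>F. (cmod (c i))\<^sup>2)"
  have "L \<ge> 0"
    unfolding L_def using \<open>K \<ge> 0\<close> l2norm_nonneg[of f] by simp
  have h: "h \<in> l2"
    unfolding h_def by (rule l2_finite_support[OF F])
  have "s \<ge> 0"
    unfolding s_def by (simp add: sum_nonneg)
  \<comment> \<open>test the coordinate vector against its own truncation \<open>h\<close>: \<open>\<parallel>h\<parallel>\<^sup>2 = \<langle>f, T h\<rangle>\<close>\<close>
  have "((\<lambda>i. h i * ip f (T (l2_unit i))) has_sum complex_of_real s) UNIV"
  proof (rule has_sum_finite_neutralI[OF F])
    have "ip f (T (l2_unit i)) = cnj (c i)" for i
      unfolding c_def by (simp add: cnj_ip)
    then show "complex_of_real s = (\<Sum>i\<in>F. h i * ip f (T (l2_unit i)))"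
      unfolding s_def of_real_sum h_def by (simp add: complex_norm_square del: of_real_power)
  qed (simp_all add: h_def)
  then have "complex_of_real s = ip f (T h)"
    using ip_bounded_op_has_sum[OF T f h] has_sum_unique by blast
  then have "s = cmod (ip f (T h))"
    using \<open>s \<ge> 0\<close> by (metis norm_of_real abs_of_nonneg)
  also have "\<dots> \<le> l2norm f * l2norm (T h)"
    by (rule l2_cauchy_schwarz[OF f bounded_op_l2[OF T]])
  also have "\<dots> \<le> L * l2norm h"
    unfolding L_def using mult_left_mono[OF K[OF h] l2norm_nonneg[of f]] by (simp add: ac_simps)
  also have "l2norm h = sqrt s"
    unfolding l2norm_def s_def
    by (subst infsumI[OF has_sum_finite_neutralI[OF F]]) (auto simp: h_def)
  finally have "sqrt s * sqrt s \<le> L * sqrt s"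
    using \<open>s \<ge> 0\<close> by simp
  then have "sqrt s \<le> L"
    using \<open>L \<ge> 0\<close> by (smt (verit) mult_strict_right_mono real_sqrt_ge_zero)
  then have "s \<le> L\<^sup>2"
    using \<open>s \<ge> 0\<close> power_mono[of "sqrt s" L 2] by simp
  then show ?thesis
    unfolding s_def c_def L_def .
qed

lemma adjoint_coordinates_l2:
  assumes T: "bounded_op T" and "K \<ge> 0" and K: "\<And>g. g \<in> l2 \<Longrightarrow> l2norm (T g) \<le> K * l2norm g"
    and f: "f \<in> l2"
  shows "(\<lambda>i. ip (T (l2_unit i)) f) \<in> l2 \<and> l2norm (\<lambda>i. ip (T (l2_unit i)) f) \<le> K * l2norm f"
proof -
  note partial_sums = adjoint_coordinates_partial_sums[OF T \<open>K \<ge> 0\<close> K f]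
  have summable: "(\<lambda>i. (cmod (ip (T (l2_unit i)) f))\<^sup>2) summable_on UNIV"
    by (rule nonneg_bdd_above_summable_on) (auto intro!: bdd_aboveI2 partial_sums)
  have "infsum (\<lambda>i. (cmod (ip (T (l2_unit i)) f))\<^sup>2) UNIV \<le> (K * l2norm f)\<^sup>2"
    by (rule infsum_le_finite_sums[OF summable]) (rule partial_sums)
  then have "l2norm (\<lambda>i. ip (T (l2_unit i)) f) \<le> sqrt ((K * l2norm f)\<^sup>2)"
    unfolding l2norm_def by (rule real_sqrt_le_mono)
  also have "\<dots> = K * l2norm f"
    using \<open>K \<ge> 0\<close> l2norm_nonneg[of f] by simp
  finally have "l2norm (\<lambda>i. ip (T (l2_unit i)) f) \<le> K * l2norm f" .
  then show ?thesis
    using summable unfolding l2_def by simp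
qed

lemma adjoint_exists:
  assumes T: "bounded_op T"
  shows "\<exists>S. bounded_op S \<and> (\<forall>f\<in>l2. \<forall>g\<in>l2. ip (S f) g = ip f (T g))"
proof -
  obtain K where "K \<ge> 0" and K: "\<And>g. g \<in> l2 \<Longrightarrow> l2norm (T g) \<le> K * l2norm g"
    using bounded_op_norm_bound[OF T] by blast
  define S where "S f = (if f \<in> l2 then (\<lambda>i. ip (T (l2_unit i)) f) else (\<lambda>i. 0))" for f
  note coordinates = adjoint_coordinates_l2[OF T \<open>K \<ge> 0\<close> K]
  have "bounded_op S"
    unfolding bounded_op_def
  proof (intro conjI ballI allI impI)
    show "S f \<in> l2" if "f \<in> l2" for f
      using coordinates that by (simp add: S_def)
    show "S (\<lambda>i. f i + c * g i) = (\<lambda>i. S f i + c * S g i)" if "f \<in> l2" "g \<in> l2" for f g c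
      using that l2_lincomb[OF that] by (simp add: S_def ip_lincomb_right bounded_op_l2[OF T])
    show "\<exists>K. \<forall>f\<in>l2. l2norm (S f) \<le> K * l2norm f"
      using coordinates by (auto simp: S_def)
    show "S f = (\<lambda>i. 0)" if "f \<notin> l2" for f
      using that by (simp add: S_def)
  qed
  moreover have "ip (S f) g = ip f (T g)" if f: "f \<in> l2" and g: "g \<in> l2" for f g
  proof -
    have "ip (S f) g = infsum (\<lambda>i. cnj (ip (T (l2_unit i)) f) * g i) UNIV"
      using f by (simp add: S_def ip_def[of "\<lambda>i. ip (T (l2_unit i)) f" g])
    also have "\<dots> = infsum (\<lambda>i. g i * ip f (T (l2_unit i))) UNIV"
      by (simp add: cnj_ip mult.commute)
    also have "\<dots> = ip f (T g)"
      using ip_bounded_op_has_sum[OF T f g] by (rule infsumI)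
    finally show ?thesis .
  qed
  ultimately show ?thesis by blast
qed

lemma adjoint_unique:
  assumes "bounded_op S1" "bounded_op S2"
    and "\<forall>f\<in>l2. \<forall>g\<in>l2. ip (S1 f) g = ip f (T g)"
    and "\<forall>f\<in>l2. \<forall>g\<in>l2. ip (S2 f) g = ip f (T g)"
  shows "S1 = S2"
proof
  fix f
  show "S1 f = S2 f"
  proof (cases "f \<in> l2")
    case True
    define d where "d = (\<lambda>i. S1 f i - S2 f i)"
    have S: "S1 f \<in> l2" "S2 f \<in> l2"
      using assms(1,2) by (simp_all add: bounded_op_l2)
    then have d: "d \<in> l2"
      unfolding d_def using l2_lincomb[OF S, of "-1"] by simp
    have "ip d g = 0" if "g \<in> l2" for g
      unfolding d_def using ip_lincomb_left[OF that S, of "-1"] assms(3,4) True that by simp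
    then have "d = (\<lambda>i. 0)"
      using ip_self_eq_0[OF d] d by blast
    then show ?thesis
      unfolding d_def by (simp add: fun_eq_iff)
  next
    case False
    then show ?thesis
      using assms(1,2) by (simp add: bounded_op_outside_l2)
  qed
qed

lemma op_adj_is_adjoint:
  assumes "bounded_op T"
  shows "bounded_op (op_adj T) \<and> (\<forall>f\<in>l2. \<forall>g\<in>l2. ip (op_adj T f) g = ip f (T g))"
proof -
  obtain S where S: "bounded_op S" "\<forall>f\<in>l2. \<forall>g\<in>l2. ip (S f) g = ip f (T g)"
    using adjoint_exists[OF assms] by blast
  then have "\<exists>!S. bounded_op S \<and> (\<forall>f\<in>l2. \<forall>g\<in>l2. ip (S f) g = ip f (T g))"
    using adjoint_unique[of _ S T] by blast
  then show ?thesis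
    unfolding op_adj_def by (rule theI')
qed

lemma bounded_op_adj: "bounded_op T \<Longrightarrow> bounded_op (op_adj T)"
  using op_adj_is_adjoint by blast

lemma op_adj_ip: "bounded_op T \<Longrightarrow> f \<in> l2 \<Longrightarrow> g \<in> l2 \<Longrightarrow> ip (op_adj T f) g = ip f (T g)"
  using op_adj_is_adjoint by blast

lemma op_adj_ip_right: "bounded_op T \<Longrightarrow> f \<in> l2 \<Longrightarrow> g \<in> l2 \<Longrightarrow> ip f (op_adj T g) = ip (T f) g"
  using op_adj_ip[of T g f] by (metis cnj_ip)

lemma op_adj_eqI:
  assumes "bounded_op T" "bounded_op S" "\<forall>f\<in>l2. \<forall>g\<in>l2. ip (S f) g = ip f (T g)"
  shows "op_adj T = S"
  using adjoint_unique[of "op_adj T" S T] op_adj_is_adjoint[OF assms(1)] assms(2,3) by blast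

lemma op_id_l2 [simp]: "f \<in> l2 \<Longrightarrow> op_id f = f"
  by (simp add: op_id_def)

lemma bounded_op_id: "bounded_op op_id"
  unfolding bounded_op_def op_id_def by (auto simp: l2_lincomb intro!: exI[of _ 1])

lemma bounded_op_zero: "bounded_op op_zero"
  unfolding bounded_op_def op_zero_def by (auto intro!: exI[of _ 0] simp: l2norm_def)

lemma bounded_op_comp:
  assumes S: "bounded_op S" and T: "bounded_op T"
  shows "bounded_op (S \<circ> T)"
proof -
  obtain K1 where "K1 \<ge> 0" and K1: "\<And>f. f \<in> l2 \<Longrightarrow> l2norm (S f) \<le> K1 * l2norm f"
    using bounded_op_norm_bound[OF S] by blast
  obtain K2 where K2: "\<And>f. f \<in> l2 \<Longrightarrow> l2norm (T f) \<le> K2 * l2norm f"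
    using bounded_op_norm_bound[OF T] by blast
  have "l2norm (S (T f)) \<le> (K1 * K2) * l2norm f" if "f \<in> l2" for f
    using order_trans[OF K1[OF bounded_op_l2[OF T]] mult_left_mono[OF K2[OF that] \<open>K1 \<ge> 0\<close>]]
    by (simp add: mult.assoc)
  then show ?thesis
    unfolding bounded_op_def using S T
    by (auto simp: bounded_op_l2 bounded_op_lincomb bounded_op_outside_l2 bounded_op_apply_zero)
qed

lemma bounded_op_add:
  assumes S: "bounded_op S" and T: "bounded_op T"
  shows "bounded_op (op_add S T)"
proof -
  obtain K1 where K1: "\<And>f. f \<in> l2 \<Longrightarrow> l2norm (S f) \<le> K1 * l2norm f"
    using bounded_op_norm_bound[OF S] by blast
  obtain K2 where K2: "\<And>f. f \<in> l2 \<Longrightarrow> l2norm (T f) \<le> K2 * l2norm f"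
    using bounded_op_norm_bound[OF T] by blast
  have bound: "\<forall>f\<in>l2. l2norm (op_add S T f) \<le> (K1 + K2) * l2norm f"
    using l2norm_triangle[OF bounded_op_l2[OF S] bounded_op_l2[OF T]] K1 K2
    by (fastforce simp: op_add_def algebra_simps intro: order_trans)
  show ?thesis
    unfolding bounded_op_def
  proof (intro conjI)
    show "\<exists>K. \<forall>f\<in>l2. l2norm (op_add S T f) \<le> K * l2norm f"
      using bound by blast
  qed (use S T in \<open>auto simp: op_add_def l2_add bounded_op_l2 bounded_op_lincomb bounded_op_outside_l2
    algebra_simps\<close>)
qed

lemma bounded_op_smult:
  assumes T: "bounded_op T"
  shows "bounded_op (op_smult c T)"
proof -
  obtain K where K: "\<And>f. f \<in> l2 \<Longrightarrow> l2norm (T f) \<le> K * l2norm f"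
    using bounded_op_norm_bound[OF T] by blast
  have bound: "\<forall>f\<in>l2. l2norm (op_smult c T f) \<le> (cmod c * K) * l2norm f"
    using mult_left_mono[OF K, of _ "cmod c"] by (simp add: op_smult_def l2norm_scale mult.assoc)
  show ?thesis
    unfolding bounded_op_def
  proof (intro conjI)
    show "\<exists>K. \<forall>f\<in>l2. l2norm (op_smult c T f) \<le> K * l2norm f"
      using bound by blast
  qed (use T in \<open>auto simp: op_smult_def l2_scale bounded_op_l2 bounded_op_lincomb
    bounded_op_outside_l2 algebra_simps\<close>)
qed

lemma op_sum_insert: "a \<notin> A \<Longrightarrow> finite A \<Longrightarrow> op_sum F (insert a A) = op_add (F a) (op_sum F A)"
  by (simp add: op_sum_def op_add_def)

lemma bounded_op_sum: "finite A \<Longrightarrow> (\<And>a. a \<in> A \<Longrightarrow> bounded_op (F a)) \<Longrightarrow> bounded_op (op_sum F A)"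
proof (induction A rule: finite_induct)
  case empty
  then show ?case
    using bounded_op_zero by (simp add: op_sum_def op_zero_def)
next
  case (insert a A)
  then show ?case by (simp add: op_sum_insert bounded_op_add)
qed

lemma op_adj_add:
  assumes S: "bounded_op S" and T: "bounded_op T"
  shows "op_adj (op_add S T) = op_add (op_adj S) (op_adj T)"
proof (rule op_adj_eqI)
  show "\<forall>f\<in>l2. \<forall>g\<in>l2. ip (op_add (op_adj S) (op_adj T) f) g = ip f (op_add S T g)"
    using S T ip_lincomb_left[of _ "op_adj S _" "op_adj T _" 1] ip_lincomb_right[of _ "S _" "T _" 1]
    by (simp add: op_add_def op_adj_ip bounded_op_l2 bounded_op_adj)
qed (simp_all add: S T bounded_op_add bounded_op_adj)

lemma op_adj_smult:
  assumes "bounded_op T"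
  shows "op_adj (op_smult c T) = op_smult (cnj c) (op_adj T)"
  using assms
  by (intro op_adj_eqI bounded_op_smult bounded_op_adj)
    (simp_all add: op_smult_def ip_scale_left ip_scale_right op_adj_ip)

lemma op_adj_comp:
  assumes "bounded_op S" "bounded_op T"
  shows "op_adj (S \<circ> T) = op_adj T \<circ> op_adj S"
  using assms
  by (intro op_adj_eqI) (simp_all add: bounded_op_comp bounded_op_adj op_adj_ip bounded_op_l2)

lemma op_adj_adj: "bounded_op T \<Longrightarrow> op_adj (op_adj T) = T"
  by (intro op_adj_eqI) (simp_all add: bounded_op_adj op_adj_ip_right)

lemma op_adj_id: "op_adj op_id = op_id"
  by (intro op_adj_eqI) (simp_all add: bounded_op_id op_id_def)

lemma op_adj_sum:
  "finite A \<Longrightarrow> (\<And>a. a \<in> A \<Longrightarrow> bounded_op (F a)) \<Longrightarrow> op_adj (op_sum F A) = op_sum (\<lambda>a. op_adj (F a)) A"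
proof (induction A rule: finite_induct)
  case empty
  have "op_adj op_zero = op_zero"
    by (intro op_adj_eqI bounded_op_zero) (simp add: op_zero_def ip_def)
  then show ?case by (simp add: op_sum_def op_zero_def)
next
  case (insert a A)
  then show ?case by (simp add: op_sum_insert op_adj_add bounded_op_sum)
qed

lemma positive_op_adj_comp:
  fixes z :: "'i op"
  assumes z: "bounded_op z"
  shows "positive_op (op_adj z \<circ> z)"
  unfolding positive_op_def
proof (intro conjI ballI)
  show "bounded_op (op_adj z \<circ> z)"
    by (intro bounded_op_comp bounded_op_adj z)
  fix f :: "'i \<Rightarrow> complex"
  assume "f \<in> l2"
  then have "ip f ((op_adj z \<circ> z) f) = complex_of_real ((l2norm (z f))\<^sup>2)"
    using op_adj_ip_right[OF z \<open>f \<in> l2\<close> bounded_op_l2[OF z]] ip_self[OF bounded_op_l2[OF z]] by simp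
  then show "Im (ip f ((op_adj z \<circ> z) f)) = 0" "Re (ip f ((op_adj z \<circ> z) f)) \<ge> 0"
    by simp_all
qed

lemma adj_comp_self_eq_zeroD:
  assumes z: "bounded_op z" and "op_adj z \<circ> z = op_zero"
  shows "z = op_zero"
proof
  fix f
  show "z f = op_zero f"
  proof (cases "f \<in> l2")
    case True
    have "ip (z f) (z f) = ip f ((op_adj z \<circ> z) f)"
      using op_adj_ip_right[OF z True bounded_op_l2[OF z]] by simp
    then have "z f = (\<lambda>i. 0)"
      using assms(2) ip_self_eq_0[OF bounded_op_l2[OF z]] by (simp add: op_zero_def)
    then show ?thesis by (simp add: op_zero_def)
  next
    case False
    then show ?thesis using bounded_op_outside_l2[OF z] by (simp add: op_zero_def)
  qed
qed

section \<open>Von Neumann algebras with a faithful tracial state\<close>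

lemma commutant_bounded: "S \<in> commutant N \<Longrightarrow> bounded_op S"
  unfolding commutant_def by blast

lemma commutant_commute:
  assumes "S \<in> commutant N" "T \<in> N"
  shows "S (T f) = T (S f)"
proof -
  have "S \<circ> T = T \<circ> S"
    using assms unfolding commutant_def by blast
  then show ?thesis by (metis comp_apply)
qed

lemma commutant_add:
  assumes N: "N \<subseteq> Collect bounded_op" and S1: "S1 \<in> commutant N" and S2: "S2 \<in> commutant N"
  shows "op_add S1 S2 \<in> commutant N"
proof -
  have "op_add S1 S2 \<circ> T = T \<circ> op_add S1 S2" if "T \<in> N" for T
  proof
    fix f
    have "S1 (T f) = T (S1 f)" "S2 (T f) = T (S2 f)"
      using commutant_commute[OF S1 that] commutant_commute[OF S2 that] by simp_all
    then show "(op_add S1 S2 \<circ> T) f = (T \<circ> op_add S1 S2) f"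
      using N that S1 S2
      by (auto simp: op_add_def bounded_op_apply_add bounded_op_l2 commutant_bounded)
  qed
  then show ?thesis
    using S1 S2 bounded_op_add commutant_bounded unfolding commutant_def by blast
qed

lemma commutant_smult:
  assumes N: "N \<subseteq> Collect bounded_op" and S: "S \<in> commutant N"
  shows "op_smult c S \<in> commutant N"
proof -
  have "op_smult c S \<circ> T = T \<circ> op_smult c S" if "T \<in> N" for T
  proof
    fix f
    have "S (T f) = T (S f)"
      using commutant_commute[OF S that] .
    then show "(op_smult c S \<circ> T) f = (T \<circ> op_smult c S) f"
      using N that S by (auto simp: op_smult_def bounded_op_scale bounded_op_l2 commutant_bounded)
  qed
  then show ?thesis
    using S bounded_op_smult commutant_bounded unfolding commutant_def by blast
qed

lemma commutant_comp:
  assumes S1: "S1 \<in> commutant N" and S2: "S2 \<in> commutant N"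
  shows "S1 \<circ> S2 \<in> commutant N"
proof -
  have "S1 \<circ> S2 \<circ> T = T \<circ> (S1 \<circ> S2)" if "T \<in> N" for T
    using commutant_commute[OF S1 that] commutant_commute[OF S2 that] by (simp add: comp_def)
  then show ?thesis
    using S1 S2 bounded_op_comp commutant_bounded unfolding commutant_def by blast
qed

lemma commutant_id:
  assumes "N \<subseteq> Collect bounded_op"
  shows "op_id \<in> commutant N"
proof -
  have "op_id \<circ> T = T \<circ> op_id" if "T \<in> N" for T
  proof
    fix f
    show "(op_id \<circ> T) f = (T \<circ> op_id) f"
      using assms that
      by (cases "f \<in> l2") (auto simp: bounded_op_l2 bounded_op_outside_l2 op_id_def bounded_op_apply_zero)
  qed
  then show ?thesis
    using bounded_op_id unfolding commutant_def by blast
qed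

locale von_neumann =
  fixes M :: "'i op set"
  assumes vN: "von_neumann_algebra M"
begin

lemma bicommutant: "commutant (commutant M) = M"
  using vN unfolding von_neumann_algebra_def by blast

lemma bounded: "T \<in> M \<Longrightarrow> bounded_op T"
  using vN unfolding von_neumann_algebra_def by blast

lemma adj_mem: "T \<in> M \<Longrightarrow> op_adj T \<in> M"
  using vN unfolding von_neumann_algebra_def by blast

lemma add_mem: "S \<in> M \<Longrightarrow> T \<in> M \<Longrightarrow> op_add S T \<in> M"
  using commutant_add[of "commutant M"] commutant_bounded bicommutant by blast

lemma smult_mem: "T \<in> M \<Longrightarrow> op_smult c T \<in> M"
  using commutant_smult[of "commutant M"] commutant_bounded bicommutant by blast

lemma comp_mem: "S \<in> M \<Longrightarrow> T \<in> M \<Longrightarrow> S \<circ> T \<in> M"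
  using commutant_comp bicommutant by blast

lemma id_mem: "op_id \<in> M"
  using commutant_id[of "commutant M"] commutant_bounded bicommutant by blast

lemma zero_mem: "op_zero \<in> M"
  using smult_mem[OF id_mem, of 0] by (simp add: op_smult_def op_zero_def)

lemma sum_mem: "finite A \<Longrightarrow> (\<And>a. a \<in> A \<Longrightarrow> F a \<in> M) \<Longrightarrow> op_sum F A \<in> M"
proof (induction A rule: finite_induct)
  case empty
  then show ?case using zero_mem by (simp add: op_sum_def op_zero_def)
next
  case (insert a A)
  then show ?case by (simp add: op_sum_insert add_mem)
qed

end

locale tracial_von_neumann = von_neumann M for M :: "'i op set" +
  fixes \<tau> :: "'i op \<Rightarrow> complex"
  assumes tracial: "tracial_state M \<tau>"
begin

lemma trace_lincomb: "T \<in> M \<Longrightarrow> S \<in> M \<Longrightarrow> \<tau> (op_add T (op_smult c S)) = \<tau> T + c * \<tau> S"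
  using tracial unfolding tracial_state_def by blast

lemma trace_id: "\<tau> op_id = 1"
  using tracial unfolding tracial_state_def by blast

lemma trace_zero: "\<tau> op_zero = 0"
  using trace_lincomb[OF zero_mem zero_mem, of 1] by (simp add: op_add_def op_smult_def op_zero_def)

lemma trace_add: "T \<in> M \<Longrightarrow> S \<in> M \<Longrightarrow> \<tau> (op_add T S) = \<tau> T + \<tau> S"
  using trace_lincomb[of T S 1] by (simp add: op_smult_def)

lemma trace_smult: "S \<in> M \<Longrightarrow> \<tau> (op_smult c S) = c * \<tau> S"
  using trace_lincomb[OF zero_mem, of S c] trace_zero by (simp add: op_add_def op_smult_def op_zero_def)

lemma trace_sum: "finite A \<Longrightarrow> (\<And>a. a \<in> A \<Longrightarrow> F a \<in> M) \<Longrightarrow> \<tau> (op_sum F A) = (\<Sum>a\<in>A. \<tau> (F a))"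
proof (induction A rule: finite_induct)
  case empty
  then show ?case using trace_zero by (simp add: op_sum_def op_zero_def)
next
  case (insert a A)
  then show ?case by (simp add: op_sum_insert trace_add sum_mem)
qed

end

section \<open>Matrices\<close>

definition matrix_unit :: "'n \<Rightarrow> 'n \<Rightarrow> complex^'n^'n" where
  "matrix_unit k m = (\<chi> k' m'. if k' = k \<and> m' = m then 1 else 0)"

lemma cadj_cadj [simp]: "cadj (cadj A) = A"
  by (simp add: cadj_def vec_eq_iff)

lemma cunitaryD:
  assumes "cunitary u"
  shows "u ** cadj u = mat 1" "cadj u ** u = mat 1"
  using assms unfolding cunitary_def by simp_all

lemma matrix_mult_entry: "(A ** B) $ i $ j = (\<Sum>k\<in>UNIV. A $ i $ k * B $ k $ j)"
  by (simp add: matrix_matrix_mult_def)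

lemma cadj_entry: "cadj A $ i $ j = cnj (A $ j $ i)"
  by (simp add: cadj_def)

lemma conj_matrix_entry:
  "(u ** x ** cadj v) $ j $ l = (\<Sum>k\<in>UNIV. \<Sum>m\<in>UNIV. x $ k $ m * (u $ j $ k * cnj (v $ l $ m)))"
  unfolding matrix_mult_entry cadj_entry sum_distrib_right
  by (subst sum.swap) (simp add: mult_ac)

lemma conj_matrix_unit_entry: "(u ** matrix_unit k m ** cadj v) $ j $ l = u $ j $ k * cnj (v $ l $ m)"
proof -
  have "(if k' = k \<and> m' = m then 1 else 0) * (u $ j $ k' * cnj (v $ l $ m'))
      = (if m' = m then if k' = k then u $ j $ k * cnj (v $ l $ m) else 0 else 0)" for k' m'
    by simp
  then show ?thesis
    unfolding conj_matrix_entry matrix_unit_def by simp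
qed

lemma lin_indep3D:
  assumes "lin_indep3 A B C" "\<And>j l. x * A $ j $ l + y * B $ j $ l + z * C $ j $ l = 0"
  shows "x = 0 \<and> y = 0 \<and> z = 0"
proof -
  have "(\<chi> i j. x * A $ i $ j + y * B $ i $ j + z * C $ i $ j) = 0"
    using assms(2) by (simp add: vec_eq_iff)
  then show ?thesis
    using assms(1) unfolding lin_indep3_def by blast
qed

lemma lin_indep3_swap:
  assumes "lin_indep3 A B C"
  shows "lin_indep3 A C B"
  unfolding lin_indep3_def
proof (intro allI impI)
  fix x y z :: complex
  assume "(\<chi> i j. x * A $ i $ j + y * C $ i $ j + z * B $ i $ j) = 0"
  then have "(\<chi> i j. x * A $ i $ j + z * B $ i $ j + y * C $ i $ j) = 0"
    by (simp add: add_ac)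
  then show "x = 0 \<and> y = 0 \<and> z = 0"
    using assms unfolding lin_indep3_def by blast
qed

lemma lin_indep3_mult_cancel:
  fixes P Q :: "complex^'n^'n"
  assumes "lin_indep3 (P ** A ** Q) (P ** B ** Q) (P ** C ** Q)"
  shows "lin_indep3 A B C"
  unfolding lin_indep3_def
proof (intro allI impI)
  fix x y z :: complex
  assume "(\<chi> i j. x * A $ i $ j + y * B $ i $ j + z * C $ i $ j) = 0"
  then have "P ** (\<chi> i j. x * A $ i $ j + y * B $ i $ j + z * C $ i $ j) ** Q = 0"
    by (simp add: matrix_matrix_mult_def vec_eq_iff)
  then have "x * (P ** A ** Q) $ j $ l + y * (P ** B ** Q) $ j $ l + z * (P ** C ** Q) $ j $ l = 0" for j l
    by (simp add: vec_eq_iff matrix_matrix_mult_def sum_distrib_left sum_distrib_right sum.distrib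
        algebra_simps)
  then show "x = 0 \<and> y = 0 \<and> z = 0"
    using lin_indep3D[OF assms] by blast
qed

lemma lin_indep3_unitary_conj:
  assumes u1: "cunitary u1" and li: "lin_indep3 (mat 1) (cadj u1 ** u2) (cadj u2 ** u1)"
  shows "lin_indep3 (mat 1) (u1 ** cadj u2) (u2 ** cadj u1)"
proof (rule lin_indep3_mult_cancel[where P = "cadj u1" and Q = u1])
  have "cadj u1 ** mat 1 ** u1 = mat 1"
    "cadj u1 ** (u1 ** cadj u2) ** u1 = cadj u2 ** u1"
    "cadj u1 ** (u2 ** cadj u1) ** u1 = cadj u1 ** u2"
    using cunitaryD[OF u1] by (metis matrix_mul_assoc matrix_mul_lid matrix_mul_rid)+
  then show "lin_indep3 (cadj u1 ** mat 1 ** u1) (cadj u1 ** (u1 ** cadj u2) ** u1)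
      (cadj u1 ** (u2 ** cadj u1) ** u1)"
    using lin_indep3_swap[OF li] by simp
qed

lemma unitary_minor_nonzero:
  fixes u1 u2 :: "complex^'n^'n"
  assumes u1: "cunitary u1" and li: "lin_indep3 (mat 1) (cadj u1 ** u2) (cadj u2 ** u1)"
  shows "\<exists>k j k' j'. cadj u1 $ k $ j * cadj u2 $ k' $ j' - cadj u1 $ k' $ j' * cadj u2 $ k $ j \<noteq> 0"
proof (rule ccontr)
  assume "\<not> ?thesis"
  then have minors: "cadj u1 $ k $ j * cadj u2 $ k' $ j' = cadj u1 $ k' $ j' * cadj u2 $ k $ j"
    for k j k' j'
    by auto
  have "cadj u1 \<noteq> 0"
  proof
    assume "cadj u1 = 0"
    then have "(mat 1 :: complex^'n^'n) = 0"
      using cunitaryD(2)[OF u1] by simp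
    moreover have "(mat 1 :: complex^'n^'n) $ i $ i = 1" for i
      by (simp add: mat_def)
    ultimately show False
      by simp
  qed
  then obtain k0 j0 where nz: "cadj u1 $ k0 $ j0 \<noteq> 0"
    by (auto simp: vec_eq_iff)
  define c where "c = cnj (cadj u2 $ k0 $ j0 / cadj u1 $ k0 $ j0)"
  have proportional: "cadj u2 $ l $ k = cnj c * cadj u1 $ l $ k" for k l
    using minors[of k0 j0 l k] nz unfolding c_def by (simp add: field_simps)
  have u2: "u2 $ k $ l = c * u1 $ k $ l" for k l
    using arg_cong[OF proportional[of l k], of cnj] by (simp add: cadj_entry)
  have "(cadj u1 ** u2) $ j $ l = c * (cadj u1 ** u1) $ j $ l" for j l
    unfolding matrix_mult_entry u2 by (simp add: sum_distrib_left mult.left_commute)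
  then have "c * mat 1 $ j $ l + (-1) * (cadj u1 ** u2) $ j $ l + 0 * (cadj u2 ** u1) $ j $ l = 0" for j l
    using cunitaryD(2)[OF u1] by simp
  from lin_indep3D[OF li this] show False
    by simp
qed

lemma op_lincomb2_comp_apply:
  assumes "bounded_op X1" "bounded_op X2" "bounded_op Y1" "bounded_op Y2"
  shows "op_add (op_smult a X1) (op_smult b X2) (op_add (op_smult c Y1) (op_smult d Y2) f) i
    = a * c * X1 (Y1 f) i + a * d * X1 (Y2 f) i + b * c * X2 (Y1 f) i + b * d * X2 (Y2 f) i"
  using assms by (simp add: op_add_def op_smult_def bounded_op_l2 bounded_op_lincomb2 algebra_simps)

lemma op_adj_lincomb2:
  assumes "bounded_op W1" "bounded_op W2"
  shows "op_adj (op_add (op_smult a W1) (op_smult b W2))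
    = op_add (op_smult (cnj a) (op_adj W1)) (op_smult (cnj b) (op_adj W2))"
  using assms by (simp add: op_adj_add bounded_op_smult op_adj_smult)

context
  fixes W1 W2 :: "'i op" and A B :: "complex^'n^'n" and U :: "'n \<Rightarrow> 'n \<Rightarrow> 'i op"
  assumes W1: "bounded_op W1" and W2: "bounded_op W2"
    and U: "\<And>k j. U k j = op_add (op_smult (A $ k $ j) W1) (op_smult (B $ k $ j) W2)"
begin

lemma two_term_adj_comp_apply:
  "op_adj (U k j) (U m l f) i = cnj (A $ k $ j) * A $ m $ l * op_adj W1 (W1 f) i
     + cnj (A $ k $ j) * B $ m $ l * op_adj W1 (W2 f) i
     + cnj (B $ k $ j) * A $ m $ l * op_adj W2 (W1 f) i
     + cnj (B $ k $ j) * B $ m $ l * op_adj W2 (W2 f) i"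
  unfolding U op_adj_lincomb2[OF W1 W2]
  by (rule op_lincomb2_comp_apply) (intro bounded_op_adj W1 W2)+

lemma two_term_adj_comp_sum:
  "op_sum (\<lambda>k. op_adj (U k j) \<circ> U k l) UNIV f i =
     (cadj A ** A) $ j $ l * op_adj W1 (W1 f) i + (cadj A ** B) $ j $ l * op_adj W1 (W2 f) i
   + (cadj B ** A) $ j $ l * op_adj W2 (W1 f) i + (cadj B ** B) $ j $ l * op_adj W2 (W2 f) i"
  unfolding op_sum_def comp_apply two_term_adj_comp_apply matrix_mult_entry cadj_entry
  by (simp add: sum.distrib sum_distrib_right)

lemma two_term_comp_adj_sum:
  "op_sum (\<lambda>k. U j k \<circ> op_adj (U l k)) UNIV f i =
     (A ** cadj A) $ j $ l * W1 (op_adj W1 f) i + (A ** cadj B) $ j $ l * W1 (op_adj W2 f) i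
   + (B ** cadj A) $ j $ l * W2 (op_adj W1 f) i + (B ** cadj B) $ j $ l * W2 (op_adj W2 f) i"
proof -
  have "U j k (op_adj (U l k) f) i = A $ j $ k * cnj (A $ l $ k) * W1 (op_adj W1 f) i
     + A $ j $ k * cnj (B $ l $ k) * W1 (op_adj W2 f) i
     + B $ j $ k * cnj (A $ l $ k) * W2 (op_adj W1 f) i
     + B $ j $ k * cnj (B $ l $ k) * W2 (op_adj W2 f) i" for k
    unfolding U op_adj_lincomb2[OF W1 W2]
    by (rule op_lincomb2_comp_apply) (intro bounded_op_adj W1 W2)+
  then show ?thesis
    unfolding op_sum_def comp_apply matrix_mult_entry cadj_entry by (simp add: sum.distrib sum_distrib_right)
qed

end

section \<open>Factorizations through a projection\<close>

lemma (in von_neumann) projection_complement: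
  assumes p: "p \<in> M" "p \<circ> p = p" "op_adj p = p"
  defines "q \<equiv> op_add op_id (op_smult (-1) p)"
  shows "q \<in> M" "op_adj q = q" "p \<circ> q = op_zero" "q \<circ> p = op_zero" "q \<circ> q = q"
proof -
  have bp: "bounded_op p"
    using bounded[OF p(1)] .
  have pp: "p (p f) = p f" for f
    using fun_cong[OF p(2)] by simp
  have p_id: "p (op_id f) = p f" for f
    using bp by (cases "f \<in> l2") (simp_all add: op_id_def bounded_op_outside_l2 bounded_op_apply_zero)
  have q_apply: "q f = (\<lambda>i. op_id f i - p f i)" for f
    by (simp add: q_def op_add_def op_smult_def)
  show qM: "q \<in> M"
    unfolding q_def by (intro add_mem smult_mem id_mem p(1))
  show "op_adj q = q"
    unfolding q_def using bp p(3)
    by (simp add: op_adj_add op_adj_smult op_adj_id bounded_op_id bounded_op_smult)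
  have pq: "p (q f) = (\<lambda>i. 0)" for f
    using bounded_op_lincomb[OF bp bounded_op_l2[OF bounded_op_id, of f] bounded_op_l2[OF bp, of f], of "-1"]
    by (simp add: q_apply p_id pp)
  show "p \<circ> q = op_zero"
    by (simp add: fun_eq_iff pq op_zero_def)
  show "q \<circ> p = op_zero"
    by (simp add: fun_eq_iff q_apply pp bounded_op_l2[OF bp] op_zero_def)
  show "q \<circ> q = q"
    by (simp add: fun_eq_iff q_apply[of "q _"] pq bounded_op_l2[OF bounded[OF qM]])
qed

lemma (in tracial_von_neumann) trace_formula_mixed_unitary:
  fixes u1 u2 :: "complex^'n^'n" and t :: real
  assumes P: "P \<in> M" "\<tau> P = complex_of_real t" and Q: "Q \<in> M" "\<tau> Q = 1 - complex_of_real t"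
    and products: "\<And>k j m l. op_adj (U k j) \<circ> U m l
      = op_add (op_smult (u1 $ j $ k * cnj (u1 $ l $ m)) P) (op_smult (u2 $ j $ k * cnj (u2 $ l $ m)) Q)"
  shows "(t *\<^sub>R (u1 ** x ** cadj u1) + (1 - t) *\<^sub>R (u2 ** x ** cadj u2)) $ j $ l =
    \<tau> (op_sum (\<lambda>(k, m). op_smult (x $ k $ m) (op_adj (U k j) \<circ> U m l)) UNIV)"
proof -
  define a where "a k m = u1 $ j $ k * cnj (u1 $ l $ m)" for k m
  define b where "b k m = u2 $ j $ k * cnj (u2 $ l $ m)" for k m
  have mem: "op_add (op_smult (a k m) P) (op_smult (b k m) Q) \<in> M" for k m
    by (intro add_mem smult_mem P(1) Q(1))
  have "\<tau> (op_sum (\<lambda>(k, m). op_smult (x $ k $ m) (op_adj (U k j) \<circ> U m l)) UNIV)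
      = (\<Sum>(k, m)\<in>UNIV. x $ k $ m * (a k m * t + b k m * (1 - t)))"
    unfolding products a_def[symmetric] b_def[symmetric]
    by (simp add: trace_sum trace_smult trace_add case_prod_beta smult_mem mem P Q)
  also have "\<dots> = (\<Sum>k\<in>UNIV. \<Sum>m\<in>UNIV. x $ k $ m * (a k m * t + b k m * (1 - t)))"
    unfolding UNIV_Times_UNIV[symmetric] sum.cartesian_product ..
  also have "\<dots> = t * (\<Sum>k\<in>UNIV. \<Sum>m\<in>UNIV. x $ k $ m * a k m)
      + (1 - t) * (\<Sum>k\<in>UNIV. \<Sum>m\<in>UNIV. x $ k $ m * b k m)"
    by (simp add: distrib_left sum.distrib sum_distrib_left mult_ac)
  also have "\<dots> = (t *\<^sub>R (u1 ** x ** cadj u1) + (1 - t) *\<^sub>R (u2 ** x ** cadj u2)) $ j $ l"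
    unfolding vector_add_component vector_scaleR_component conj_matrix_entry
    by (simp add: a_def b_def scaleR_conv_of_real)
  finally show ?thesis ..
qed

lemma (in tracial_von_neumann) factorizable_of_projection:
  fixes u1 u2 :: "complex^'n^'n" and t :: real
  assumes u1: "cunitary u1" and u2: "cunitary u2"
    and p: "p \<in> M" "p \<circ> p = p" "op_adj p = p" "\<tau> p = complex_of_real t"
  shows "factorizable_with_ancilla
    (\<lambda>x. t *\<^sub>R (u1 ** x ** cadj u1) + (1 - t) *\<^sub>R (u2 ** x ** cadj u2)) M \<tau>"
proof -
  define q where "q = op_add op_id (op_smult (-1) p)"
  note q = projection_complement[OF p(1-3), folded q_def]
  have bp: "bounded_op p" and bq: "bounded_op q"
    using bounded p(1) q(1) by blast+
  have trace_q: "\<tau> q = 1 - complex_of_real t"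
    using trace_lincomb[OF id_mem p(1), of "-1"] trace_id p(4) by (simp add: q_def)
  have products: "p (p f) i = p f i" "p (q f) i = 0" "q (p f) i = 0" "q (q f) i = q f i" for f i
    using fun_cong[OF p(2), of f] fun_cong[OF q(3), of f] fun_cong[OF q(4), of f] fun_cong[OF q(5), of f]
    by (simp_all add: op_zero_def)
  have delta: "(if j = l then op_id else op_zero) f i = mat 1 $ j $ l * (p f i + q f i)" for j l f i
    by (simp add: q_def op_add_def op_smult_def mat_def op_zero_def)
  define U where "U k j = op_add (op_smult (cadj u1 $ k $ j) p) (op_smult (cadj u2 $ k $ j) q)" for k j
  have "U k j \<in> M" for k j
    unfolding U_def by (intro add_mem smult_mem p(1) q(1))
  moreover have "op_sum (\<lambda>k. op_adj (U k j) \<circ> U k l) UNIV = (if j = l then op_id else op_zero)" for j l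
    using cunitaryD[OF u1] cunitaryD[OF u2]
    by (intro ext) (simp add: two_term_adj_comp_sum[OF bp bq U_def] p(3) q(2) products delta distrib_left)
  moreover have "op_sum (\<lambda>k. U j k \<circ> op_adj (U l k)) UNIV = (if j = l then op_id else op_zero)" for j l
    using cunitaryD[OF u1] cunitaryD[OF u2]
    by (intro ext) (simp add: two_term_comp_adj_sum[OF bp bq U_def] p(3) q(2) products delta distrib_left)
  moreover have "op_adj (U k j) \<circ> U m l
      = op_add (op_smult (u1 $ j $ k * cnj (u1 $ l $ m)) p) (op_smult (u2 $ j $ k * cnj (u2 $ l $ m)) q)"
    for k j m l
    by (intro ext) (simp add: two_term_adj_comp_apply[OF bp bq U_def] p(3) q(2) products cadj_entry
        op_add_def op_smult_def)
  note trace_formula_mixed_unitary[OF p(1,4) q(1) trace_q this]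
  ultimately show ?thesis
    unfolding factorizable_with_ancilla_def by blast
qed

section \<open>Projections from factorizations\<close>

lemma (in tracial_von_neumann) factorization_trace_entries:
  assumes "\<forall>x j l. \<Phi> x $ j $ l = \<tau> (op_sum (\<lambda>(k, m). op_smult (x $ k $ m) (op_adj (U k j) \<circ> U m l)) UNIV)"
  shows "\<tau> (op_adj (U k j) \<circ> U m l) = \<Phi> (matrix_unit k m) $ j $ l"
proof -
  have "op_sum (\<lambda>(k', m'). op_smult (matrix_unit k m $ k' $ m') (op_adj (U k' j) \<circ> U m' l)) UNIV
      = op_adj (U k j) \<circ> U m l"
  proof (intro ext)
    fix f i
    have "(\<lambda>(k', m'). op_smult (matrix_unit k m $ k' $ m') (op_adj (U k' j) \<circ> U m' l)) r f i
        = (if r = (k, m) then (op_adj (U k j) \<circ> U m l) f i else 0)" for r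
      by (cases r) (simp add: matrix_unit_def op_smult_def)
    then show "op_sum (\<lambda>(k', m'). op_smult (matrix_unit k m $ k' $ m') (op_adj (U k' j) \<circ> U m' l)) UNIV f i
        = (op_adj (U k j) \<circ> U m l) f i"
      unfolding op_sum_def by simp
  qed
  then show ?thesis
    using assms[rule_format, of "matrix_unit k m" j l] by simp
qed

lemma (in tracial_von_neumann) trace_gram:
  fixes V :: "'r::finite \<Rightarrow> 'i op"
  assumes V: "\<And>r. V r \<in> M"
  shows "\<tau> (op_adj (op_sum (\<lambda>r. op_smult (c r) (V r)) UNIV) \<circ> op_sum (\<lambda>r. op_smult (c r) (V r)) UNIV)
    = (\<Sum>r\<in>UNIV. \<Sum>s\<in>UNIV. cnj (c r) * c s * \<tau> (op_adj (V r) \<circ> V s))"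
proof -
  have bV: "bounded_op (V r)" for r
    using bounded[OF V] .
  have "op_adj (op_sum (\<lambda>r. op_smult (c r) (V r)) UNIV) \<circ> op_sum (\<lambda>r. op_smult (c r) (V r)) UNIV
    = op_sum (\<lambda>r. op_sum (\<lambda>s. op_smult (cnj (c r) * c s) (op_adj (V r) \<circ> V s)) UNIV) UNIV"
  proof (intro ext)
    fix f i
    have "op_adj (op_sum (\<lambda>r. op_smult (c r) (V r)) UNIV) = op_sum (\<lambda>r. op_smult (cnj (c r)) (op_adj (V r))) UNIV"
      using bV by (simp add: op_adj_sum bounded_op_smult op_adj_smult)
    moreover have "op_adj (V r) (\<lambda>i. \<Sum>s\<in>UNIV. c s * V s f i) = (\<lambda>i. \<Sum>s\<in>UNIV. c s * op_adj (V r) (V s f) i)"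
      for r
      using bV by (intro bounded_op_apply_sum bounded_op_adj bounded_op_l2) auto
    ultimately show "(op_adj (op_sum (\<lambda>r. op_smult (c r) (V r)) UNIV) \<circ> op_sum (\<lambda>r. op_smult (c r) (V r)) UNIV) f i
      = op_sum (\<lambda>r. op_sum (\<lambda>s. op_smult (cnj (c r) * c s) (op_adj (V r) \<circ> V s)) UNIV) UNIV f i"
      by (simp add: op_sum_def op_smult_def sum_distrib_left mult.assoc)
  qed
  moreover have "op_smult a (op_adj (V r) \<circ> V s) \<in> M" for a r s
    by (intro smult_mem comp_mem adj_mem V)
  ultimately show ?thesis
    by (simp add: trace_sum sum_mem trace_smult comp_mem adj_mem V)
qed

lemma (in tracial_von_neumann) trace_gram_rank_two:
  fixes \<alpha> \<beta> :: "'r::finite \<Rightarrow> complex"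
  assumes V: "\<And>r. V r \<in> M"
    and gram: "\<And>r s. \<tau> (op_adj (V r) \<circ> V s) = a * (cnj (\<alpha> r) * \<alpha> s) + b * (cnj (\<beta> r) * \<beta> s)"
  shows "\<tau> (op_adj (op_sum (\<lambda>r. op_smult (c r) (V r)) UNIV) \<circ> op_sum (\<lambda>r. op_smult (c r) (V r)) UNIV)
    = a * (cnj (\<Sum>r\<in>UNIV. c r * \<alpha> r) * (\<Sum>r\<in>UNIV. c r * \<alpha> r))
    + b * (cnj (\<Sum>r\<in>UNIV. c r * \<beta> r) * (\<Sum>r\<in>UNIV. c r * \<beta> r))"
  unfolding trace_gram[OF V] gram
  by (simp add: sum_product sum_distrib_left sum.distrib algebra_simps)

lemma dual_coefficients:
  fixes \<alpha> \<beta> :: "'r::finite \<Rightarrow> complex"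
  assumes "\<alpha> p * \<beta> q - \<alpha> q * \<beta> p \<noteq> 0"
  obtains c1 c2 where "(\<Sum>r\<in>UNIV. c1 r * \<alpha> r) = 1" "(\<Sum>r\<in>UNIV. c1 r * \<beta> r) = 0"
    "(\<Sum>r\<in>UNIV. c2 r * \<alpha> r) = 0" "(\<Sum>r\<in>UNIV. c2 r * \<beta> r) = 1"
proof -
  define D where "D = \<alpha> p * \<beta> q - \<alpha> q * \<beta> p"
  define e where "e x y r = (if r = p then x else 0) + (if r = q then y else 0)" for x y :: complex and r
  have delta: "(if r = a then x else 0) * g r = (if r = a then x * g a else 0)" for r a x and g :: "'r \<Rightarrow> complex"
    by simp
  have e: "(\<Sum>r\<in>UNIV. e x y r * g r) = x * g p + y * g q" for x y and g :: "'r \<Rightarrow> complex"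
    by (simp add: e_def distrib_right sum.distrib delta)
  have "D \<noteq> 0"
    using assms by (simp add: D_def)
  show ?thesis
    by (rule that[of "e (\<beta> q / D) (- \<beta> p / D)" "e (- \<alpha> q / D) (\<alpha> p / D)"])
      (insert \<open>D \<noteq> 0\<close>, simp_all only: e, simp_all add: field_simps, simp_all add: D_def algebra_simps)
qed

locale faithful_tracial_von_neumann = tracial_von_neumann +
  assumes faithful: "faithful_state M \<tau>"
begin

lemma trace_adj_comp_eq_0:
  assumes z: "z \<in> M" and "\<tau> (op_adj z \<circ> z) = 0"
  shows "z = op_zero"
proof (rule adj_comp_self_eq_zeroD[OF bounded[OF z]])
  show "op_adj z \<circ> z = op_zero"
    using faithful positive_op_adj_comp[OF bounded[OF z]] comp_mem[OF adj_mem[OF z] z] assms(2)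
    unfolding faithful_state_def by blast
qed

lemma rank_two_gram_decomposition:
  fixes \<alpha> \<beta> :: "'r::finite \<Rightarrow> complex"
  assumes V: "\<And>r. V r \<in> M"
    and gram: "\<And>r s. \<tau> (op_adj (V r) \<circ> V s) = a * (cnj (\<alpha> r) * \<alpha> s) + b * (cnj (\<beta> r) * \<beta> s)"
    and minor: "\<alpha> p * \<beta> q - \<alpha> q * \<beta> p \<noteq> 0"
  obtains w1 w2 where "w1 \<in> M" "w2 \<in> M"
    "\<And>r. V r = op_add (op_smult (\<alpha> r) w1) (op_smult (\<beta> r) w2)" "\<tau> (op_adj w1 \<circ> w1) = a"
proof -
  define L where "L c = op_sum (\<lambda>r. op_smult (c r) (V r)) UNIV" for c
  have L_mem: "L c \<in> M" for c
    unfolding L_def by (intro sum_mem smult_mem V) simp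
  have L_apply: "L c f i = (\<Sum>r\<in>UNIV. c r * V r f i)" for c f i
    by (simp add: L_def op_sum_def op_smult_def)
  have L_gram: "\<tau> (op_adj (L c) \<circ> L c)
      = a * (cnj (\<Sum>r\<in>UNIV. c r * \<alpha> r) * (\<Sum>r\<in>UNIV. c r * \<alpha> r))
      + b * (cnj (\<Sum>r\<in>UNIV. c r * \<beta> r) * (\<Sum>r\<in>UNIV. c r * \<beta> r))" for c
    unfolding L_def by (rule trace_gram_rank_two[OF V gram])
  obtain c1 c2 where c1: "(\<Sum>r\<in>UNIV. c1 r * \<alpha> r) = 1" "(\<Sum>r\<in>UNIV. c1 r * \<beta> r) = 0"
    and c2: "(\<Sum>r\<in>UNIV. c2 r * \<alpha> r) = 0" "(\<Sum>r\<in>UNIV. c2 r * \<beta> r) = 1"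
    using dual_coefficients[OF minor] .
  have "V r0 = op_add (op_smult (\<alpha> r0) (L c1)) (op_smult (\<beta> r0) (L c2))" for r0
  proof -
    define c where "c r = (if r = r0 then 1 else 0) - \<alpha> r0 * c1 r - \<beta> r0 * c2 r" for r
    have c_sum: "(\<Sum>r\<in>UNIV. c r * g r)
        = g r0 - \<alpha> r0 * (\<Sum>r\<in>UNIV. c1 r * g r) - \<beta> r0 * (\<Sum>r\<in>UNIV. c2 r * g r)" for g
    proof -
      have "c r * g r = (if r = r0 then g r else 0) - \<alpha> r0 * (c1 r * g r) - \<beta> r0 * (c2 r * g r)" for r
        by (simp add: c_def algebra_simps)
      then show ?thesis
        by (simp add: sum_subtractf sum_distrib_left)
    qed
    \<comment> \<open>\<open>c\<close> is orthogonal to \<open>\<alpha>\<close> and \<open>\<beta>\<close>, so the Gram form vanishes on \<open>L c\<close>\<close>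
    have "\<tau> (op_adj (L c) \<circ> L c) = 0"
      unfolding L_gram c_sum c1 c2 by simp
    then have "L c = op_zero"
      using trace_adj_comp_eq_0[OF L_mem] by blast
    then have "L c f i = 0" for f i
      by (simp add: op_zero_def)
    then have "V r0 f i - \<alpha> r0 * L c1 f i - \<beta> r0 * L c2 f i = 0" for f i
      by (simp only: L_apply c_sum)
    then show ?thesis
      by (intro ext) (simp add: op_add_def op_smult_def diff_diff_eq)
  qed
  moreover have "\<tau> (op_adj (L c1) \<circ> L c1) = a"
    unfolding L_gram c1 by simp
  ultimately show ?thesis
    using that L_mem by blast
qed

end

lemma unitary_two_term_relations:
  fixes u1 u2 :: "complex^'n^'n" and U :: "'n \<Rightarrow> 'n \<Rightarrow> 'i op"
  assumes u1: "cunitary u1" and u2: "cunitary u2"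
    and li: "lin_indep3 (mat 1) (cadj u1 ** u2) (cadj u2 ** u1)"
    and w1: "bounded_op w1" and w2: "bounded_op w2"
    and U: "\<And>k j. U k j = op_add (op_smult (cadj u1 $ k $ j) w1) (op_smult (cadj u2 $ k $ j) w2)"
    and isometry: "\<And>j l. op_sum (\<lambda>k. op_adj (U k j) \<circ> U k l) UNIV = (if j = l then op_id else op_zero)"
    and coisometry: "\<And>j l. op_sum (\<lambda>k. U j k \<circ> op_adj (U l k)) UNIV = (if j = l then op_id else op_zero)"
  shows "op_add (op_adj w1 \<circ> w1) (op_adj w2 \<circ> w2) = op_id" "w1 \<circ> op_adj w2 = op_zero"
proof -
  have delta: "(if j = l then op_id else op_zero) f i = mat 1 $ j $ l * op_id f i" for j l f i
    by (simp add: mat_def op_zero_def)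
  note unitary = cunitaryD[OF u1] cunitaryD[OF u2]
  show "op_add (op_adj w1 \<circ> w1) (op_adj w2 \<circ> w2) = op_id"
  proof (intro ext)
    fix f i
    have "(op_adj w1 (w1 f) i + op_adj w2 (w2 f) i - op_id f i) * mat 1 $ j $ l
        + op_adj w1 (w2 f) i * (u1 ** cadj u2) $ j $ l + op_adj w2 (w1 f) i * (u2 ** cadj u1) $ j $ l = 0"
      for j l
      using fun_cong[OF fun_cong[OF isometry[of j l], of f], of i]
      unfolding two_term_adj_comp_sum[OF w1 w2 U] by (simp add: unitary delta algebra_simps)
    from lin_indep3D[OF lin_indep3_unitary_conj[OF u1 li] this]
    show "op_add (op_adj w1 \<circ> w1) (op_adj w2 \<circ> w2) f i = op_id f i"
      by (simp add: op_add_def)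
  qed
  show "w1 \<circ> op_adj w2 = op_zero"
  proof (intro ext)
    fix f i
    have "(w1 (op_adj w1 f) i + w2 (op_adj w2 f) i - op_id f i) * mat 1 $ j $ l
        + w1 (op_adj w2 f) i * (cadj u1 ** u2) $ j $ l + w2 (op_adj w1 f) i * (cadj u2 ** u1) $ j $ l = 0"
      for j l
      using fun_cong[OF fun_cong[OF coisometry[of j l], of f], of i]
      unfolding two_term_comp_adj_sum[OF w1 w2 U] by (simp add: unitary delta algebra_simps)
    from lin_indep3D[OF li this] show "(w1 \<circ> op_adj w2) f i = op_zero f i"
      by (simp add: op_zero_def)
  qed
qed

lemma adj_comp_projection:
  assumes w1: "bounded_op w1" and w2: "bounded_op w2"
    and complete: "op_add (op_adj w1 \<circ> w1) (op_adj w2 \<circ> w2) = op_id"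
    and orthogonal: "w1 \<circ> op_adj w2 = op_zero"
  shows "(op_adj w1 \<circ> w1) \<circ> (op_adj w1 \<circ> w1) = op_adj w1 \<circ> w1" "op_adj (op_adj w1 \<circ> w1) = op_adj w1 \<circ> w1"
proof -
  have "w1 (op_adj w1 (w1 f)) = w1 f" for f
  proof -
    have "w1 f = w1 (op_id f)"
      using w1 by (cases "f \<in> l2") (simp_all add: op_id_def bounded_op_outside_l2 bounded_op_apply_zero)
    also have "op_id f = (\<lambda>i. op_adj w1 (w1 f) i + op_adj w2 (w2 f) i)"
      using fun_cong[OF complete, of f] by (simp add: op_add_def)
    also have "w1 \<dots> = (\<lambda>i. w1 (op_adj w1 (w1 f)) i + w1 (op_adj w2 (w2 f)) i)"
      using w1 w2 by (simp add: bounded_op_apply_add bounded_op_adj bounded_op_l2)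
    also have "\<dots> = w1 (op_adj w1 (w1 f))"
      using fun_cong[OF orthogonal, of "w2 f"] by (simp add: op_zero_def)
    finally show ?thesis ..
  qed
  then show "(op_adj w1 \<circ> w1) \<circ> (op_adj w1 \<circ> w1) = op_adj w1 \<circ> w1"
    by (simp add: comp_def)
  show "op_adj (op_adj w1 \<circ> w1) = op_adj w1 \<circ> w1"
    using w1 by (simp add: op_adj_comp bounded_op_adj op_adj_adj)
qed

lemma (in faithful_tracial_von_neumann) projection_of_factorizable:
  fixes u1 u2 :: "complex^'n^'n" and t :: real
  assumes u1: "cunitary u1" and u2: "cunitary u2"
    and li: "lin_indep3 (mat 1) (cadj u1 ** u2) (cadj u2 ** u1)"
    and "factorizable_with_ancilla
      (\<lambda>x. t *\<^sub>R (u1 ** x ** cadj u1) + (1 - t) *\<^sub>R (u2 ** x ** cadj u2)) M \<tau>"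
  shows "\<exists>p\<in>M. p \<circ> p = p \<and> op_adj p = p \<and> \<tau> p = complex_of_real t"
proof -
  obtain U :: "'n \<Rightarrow> 'n \<Rightarrow> _" where U_mem: "\<And>j k. U j k \<in> M"
    and isometry: "\<And>j l. op_sum (\<lambda>k. op_adj (U k j) \<circ> U k l) UNIV = (if j = l then op_id else op_zero)"
    and coisometry: "\<And>j l. op_sum (\<lambda>k. U j k \<circ> op_adj (U l k)) UNIV = (if j = l then op_id else op_zero)"
    and trace: "\<forall>x j l. (t *\<^sub>R (u1 ** x ** cadj u1) + (1 - t) *\<^sub>R (u2 ** x ** cadj u2)) $ j $ l =
      \<tau> (op_sum (\<lambda>(k, m). op_smult (x $ k $ m) (op_adj (U k j) \<circ> U m l)) UNIV)"
    using assms(4) unfolding factorizable_with_ancilla_def by blast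
  define \<alpha> where "\<alpha> r = cadj u1 $ fst r $ snd r" for r
  define \<beta> where "\<beta> r = cadj u2 $ fst r $ snd r" for r
  have gram: "\<tau> (op_adj (case_prod U r) \<circ> case_prod U s)
      = t * (cnj (\<alpha> r) * \<alpha> s) + (1 - t) * (cnj (\<beta> r) * \<beta> s)" for r s
    using factorization_trace_entries[OF trace, of "fst r" "snd r" "fst s" "snd s"]
    unfolding vector_add_component vector_scaleR_component
    by (simp add: case_prod_beta conj_matrix_unit_entry scaleR_conv_of_real \<alpha>_def \<beta>_def cadj_entry)
  obtain k j k' j' where minor: "\<alpha> (k, j) * \<beta> (k', j') - \<alpha> (k', j') * \<beta> (k, j) \<noteq> 0"
    using unitary_minor_nonzero[OF u1 li] by (auto simp: \<alpha>_def \<beta>_def)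
  have "case_prod U r \<in> M" for r
    by (simp add: case_prod_beta U_mem)
  then obtain w1 w2 where w: "w1 \<in> M" "w2 \<in> M"
    and decomposition: "\<And>r. case_prod U r = op_add (op_smult (\<alpha> r) w1) (op_smult (\<beta> r) w2)"
    and trace_w1: "\<tau> (op_adj w1 \<circ> w1) = complex_of_real t"
    using rank_two_gram_decomposition[OF _ gram minor] by blast
  have "U k j = op_add (op_smult (cadj u1 $ k $ j) w1) (op_smult (cadj u2 $ k $ j) w2)" for k j
    using decomposition[of "(k, j)"] by (simp add: \<alpha>_def \<beta>_def)
  note relations = unitary_two_term_relations[OF u1 u2 li bounded[OF w(1)] bounded[OF w(2)] this
      isometry coisometry]
  show ?thesis
    using adj_comp_projection[OF bounded[OF w(1)] bounded[OF w(2)] relations]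
      comp_mem[OF adj_mem[OF w(1)] w(1)] trace_w1 by blast
qed

theorem mainTheorem4:
  fixes u1 u2 :: "complex^'n^'n" and t :: real
    and M :: "'i op set" and \<tau> :: "'i op \<Rightarrow> complex"
  assumes "CARD('n) \<ge> 3"
    and "cunitary u1" and "cunitary u2"
    and "lin_indep3 (mat 1) (cadj u1 ** u2) (cadj u2 ** u1)"
    and "0 < t" and "t < 1"
    and "von_neumann_algebra M"
    and "normal_faithful_tracial_state M \<tau>"
  shows "factorizable_with_ancilla
           (\<lambda>x. t *\<^sub>R (u1 ** x ** cadj u1) + (1 - t) *\<^sub>R (u2 ** x ** cadj u2)) M \<tau>
         \<longleftrightarrow> (\<exists>p\<in>M. p \<circ> p = p \<and> op_adj p = p \<and> \<tau> p = complex_of_real t)"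
proof -
  interpret faithful_tracial_von_neumann M \<tau>
    using assms(7,8) by unfold_locales (simp_all add: normal_faithful_tracial_state_def)
  show ?thesis
    using factorizable_of_projection[OF assms(2,3)] projection_of_factorizable[OF assms(2-4)] by blast
qed

end
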